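(* Let $N\ge1$, $\varphi,\gamma\in(0,1)$ with $\varphi+\gamma\ge1$. Consider one transition $\boldsymbol{x}\to Y$ on $\{0,1\}^N$ generated as follows: $Z$ is a random element of $\{0,1\}^N$ with exchangeable coordinates, $(U_k)_k$ are i.i.d. Uniform$(0,1)$ independent of $Z$, and independently for each $k$: if $Z[k]=1$, $Y[k]=1$ iff $\boldsymbol{x}[k]=0$ or ($\boldsymbol{x}[k]=1$ and $U_k\ge\bar\varphi/\gamma$); if $Z[k]=0$ and $\varphi\le\gamma$, $Y[k]=0$ iff $\boldsymbol{x}[k]=0$ or ($\boldsymbol{x}[k]=1$ and $U_k\ge\varphi/\gamma$); if $Z[k]=0$ and $\varphi>\gamma$, $Y[k]=1$ iff $\boldsymbol{x}[k]=1$ or ($\boldsymbol{x}[k]=0$ and $U_k\ge\bar\varphi/\bar\gamma$). Let $N_{0\cdot}=N-\|\boldsymbol{x}\|$, $N_{1\cdot}=\|\boldsymbol{x}\|$, $N_{01}=|\{k:\boldsymbol{x}[k]=0,Y[k]=1\}|$, $N_{11}=|\{k:\boldsymbol{x}[k]=1,Y[k]=1\}|$. Then the probability generating function $\mathbb{E}[s_{01}^{N_{01}}s_{11}^{N_{11}}\mid\|Z\|=\zeta]$, where $N=N_{0\cdot}+N_{1\cdot}$, is the coefficient of $\binom{N}{\zeta}\xi^\zeta$ in $$\begin{cases}(1+\xi s_{01})^{N_{0\cdot}}\big(1-\varphi/\gamma+s_{11}\varphi/\gamma+\xi(\bar\varphi/\gamma+s_{11}(1-\bar\varphi/\gamma))\big)^{N_{1\cdot}},&\varphi\le\gamma,\\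 \big(\bar\varphi/\bar\gamma+s_{01}(1-\bar\varphi/\bar\gamma)+\xi s_{01}\big)^{N_{0\cdot}}\big(s_{11}+\xi(\bar\varphi/\gamma+s_{11}(1-\bar\varphi/\gamma))\big)^{N_{1\cdot}},&\varphi>\gamma.\end{cases}$$
   Context: $\bar a=1-a$; $\|\boldsymbol{x}\|$ is the number of ones of $\boldsymbol{x}\in\{0,1\}^N$. This describes a transition of a time-homogeneous process with exchangeable coordinates from $X_{t-1}=\boldsymbol{x}$ to $X_t=Y$ with driving variable $Z=Z_t$. *)

theory Defs
  imports "HOL-Probability.Probability" "HOL-Combinatorics.Permutations"
          "HOL-Computational_Algebra.Polynomial"
begin

text \<open>States in {0,1}^N are functions nat => bool, only coordinates k < N matter.\<close>

definition ones :: "nat \<Rightarrow> (nat \<Rightarrow> bool) \<Rightarrow> nat" where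
  "ones N x = card {k. k < N \<and> x k}"

definition exchangeable :: "nat \<Rightarrow> (nat \<Rightarrow> bool) pmf \<Rightarrow> bool" where
  "exchangeable N Z \<longleftrightarrow> (\<forall>\<pi>. \<pi> permutes {..<N} \<longrightarrow> map_pmf (\<lambda>z. z \<circ> \<pi>) Z = Z)"

definition step :: "real \<Rightarrow> real \<Rightarrow> bool \<Rightarrow> bool \<Rightarrow> real \<Rightarrow> bool" where
  "step \<phi> \<gamma> xk zk u =
     (if zk then (\<not> xk \<or> (xk \<and> u \<ge> (1 - \<phi>) / \<gamma>))
      else if \<phi> \<le> \<gamma> then \<not> (\<not> xk \<or> (xk \<and> u \<ge> \<phi> / \<gamma>))
      else (xk \<or> (\<not> xk \<and> u \<ge> (1 - \<phi>) / (1 - \<gamma>))))"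

definition newstate :: "real \<Rightarrow> real \<Rightarrow> (nat \<Rightarrow> bool) \<Rightarrow> (nat \<Rightarrow> bool) \<Rightarrow> (nat \<Rightarrow> real) \<Rightarrow> nat \<Rightarrow> bool" where
  "newstate \<phi> \<gamma> x z u k = step \<phi> \<gamma> (x k) (z k) (u k)"

definition N01 :: "nat \<Rightarrow> (nat \<Rightarrow> bool) \<Rightarrow> (nat \<Rightarrow> bool) \<Rightarrow> nat" where
  "N01 N x y = card {k. k < N \<and> \<not> x k \<and> y k}"

definition N11 :: "nat \<Rightarrow> (nat \<Rightarrow> bool) \<Rightarrow> (nat \<Rightarrow> bool) \<Rightarrow> nat" where
  "N11 N x y = card {k. k < N \<and> x k \<and> y k}"

definition cond_law :: "nat \<Rightarrow> (nat \<Rightarrow> bool) pmf \<Rightarrow> nat \<Rightarrow> ((nat \<Rightarrow> bool) \<times> (nat \<Rightarrow> real)) measure" where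
  "cond_law N Z \<zeta> = measure_pmf (cond_pmf Z {z. ones N z = \<zeta>})
      \<Otimes>\<^sub>M PiM {..<N} (\<lambda>_. uniform_measure lborel {0<..<1::real})"

definition gen_poly :: "real \<Rightarrow> real \<Rightarrow> nat \<Rightarrow> nat \<Rightarrow> real \<Rightarrow> real \<Rightarrow> real poly" where
  "gen_poly \<phi> \<gamma> n0 n1 s01 s11 =
     (if \<phi> \<le> \<gamma> then
        [:1, s01:] ^ n0 *
        [:1 - \<phi>/\<gamma> + s11 * \<phi>/\<gamma>, (1-\<phi>)/\<gamma> + s11 * (1 - (1-\<phi>)/\<gamma>):] ^ n1
      else
        [:(1-\<phi>)/(1-\<gamma>) + s01 * (1 - (1-\<phi>)/(1-\<gamma>)), s01:] ^ n0 *
        [:s11, (1-\<phi>)/\<gamma> + s11 * (1 - (1-\<phi>)/\<gamma>):] ^ n1)"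

end

theory Submission
  imports Defs
begin

text \<open>Given the driving variable Z, coordinate k of Y contributes the factor s01 or s11
  to the integrand exactly when Y[k] = 1, and the U_k are independent; integrating them out
  leaves a product of factors g(x[k], Z[k]), where g is pgf_factor_mean. Conditionally on
  ||Z|| = \<zeta>, exchangeability makes the support of Z uniformly distributed over the
  \<zeta>-subsets of {0..N-1}, so the conditional expectation of the product is the \<zeta>-th
  elementary symmetric sum of the linear polynomials g(x[k], 0) + \<xi> g(x[k], 1), divided by
  (N choose \<zeta>). Grouping the coordinates by x[k] turns their product into the two powers
  in gen_poly.\<close>

abbreviation uniform_01 :: "real measure" where
  "uniform_01 \<equiv> uniform_measure lborel {0<..<1::real}"

lemma prob_space_uniform_01: "prob_space uniform_01"
  by (rule prob_space_uniform_measure) auto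

lemma measure_uniform_01_atLeast:
  assumes "0 \<le> t" "t \<le> 1"
  shows "measure uniform_01 {t..} = 1 - t"
proof -
  have "{0<..<1} \<inter> {t..} = (if t = 0 then {0<..<1} else {t..<1::real})"
    using assms by auto
  then show ?thesis
    using assms by (subst measure_uniform_measure) auto
qed

lemma integral_uniform_01_threshold:
  assumes "0 \<le> t" "t \<le> 1"
  shows "(\<integral>u. (if t \<le> u then a else b) \<partial>uniform_01) = a * (1 - t) + b * t"
proof -
  interpret prob_space uniform_01 by (rule prob_space_uniform_01)
  have indicator_integrable: "integrable uniform_01 (indicator {t..} :: real \<Rightarrow> real)"
    by (rule integrable_const_bound[where B=1]) auto
  have "(\<integral>u. (if t \<le> u then a else b) \<partial>uniform_01)
      = (\<integral>u. b + (a - b) * indicator {t..} u \<partial>uniform_01)"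
    by (intro Bochner_Integration.integral_cong) (auto simp: indicator_def)
  also have "\<dots> = b + (a - b) * measure uniform_01 {t..}"
    using indicator_integrable by (subst Bochner_Integration.integral_add) auto
  finally show ?thesis
    using measure_uniform_01_atLeast[OF assms] by (simp add: algebra_simps)
qed

lemma prod_monom_1:
  fixes b :: "'b \<Rightarrow> 'a::comm_ring_1"
  assumes "finite X"
  shows "(\<Prod>k\<in>X. monom (b k) 1) = monom (\<Prod>k\<in>X. b k) (card X)"
  using assms by (induction X rule: finite_induct) (auto simp: mult_monom)

lemma coeff_prod_linear:
  fixes a b :: "'b \<Rightarrow> 'a::comm_ring_1"
  assumes "finite A"
  shows "coeff (\<Prod>k\<in>A. [:a k, b k:]) j =
    (\<Sum>S | S \<subseteq> A \<and> card S = j. \<Prod>k\<in>A. if k \<in> S then b k else a k)"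
proof -
  have "(\<Prod>k\<in>A. [:a k, b k:]) = (\<Prod>k\<in>A. monom (b k) 1 + [:a k:])"
    by (intro prod.cong refl) (simp add: monom_Suc monom_0)
  also have "\<dots> = (\<Sum>X\<in>Pow A. (\<Prod>k\<in>X. monom (b k) 1) * (\<Prod>k\<in>A-X. [:a k:]))"
    by (rule prod_add[OF assms])
  also have "\<dots> = (\<Sum>X\<in>Pow A. monom ((\<Prod>k\<in>X. b k) * (\<Prod>k\<in>A-X. a k)) (card X))"
  proof (intro sum.cong refl)
    fix X assume "X \<in> Pow A"
    then have "finite X"
      using assms finite_subset by auto
    then show "(\<Prod>k\<in>X. monom (b k) 1) * (\<Prod>k\<in>A-X. [:a k:])
             = monom ((\<Prod>k\<in>X. b k) * (\<Prod>k\<in>A-X. a k)) (card X)"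
      by (simp only: prod_monom_1 prod_to_poly) (simp add: smult_monom mult.commute)
  qed
  finally have "coeff (\<Prod>k\<in>A. [:a k, b k:]) j =
      (\<Sum>X\<in>Pow A. if card X = j then (\<Prod>k\<in>X. b k) * (\<Prod>k\<in>A-X. a k) else 0)"
    by (simp add: coeff_sum coeff_monom eq_commute)
  also have "\<dots> = (\<Sum>X | X \<subseteq> A \<and> card X = j. (\<Prod>k\<in>X. b k) * (\<Prod>k\<in>A-X. a k))"
    by (subst sum.inter_filter[symmetric]) (simp_all add: assms)
  also have "\<dots> = (\<Sum>S | S \<subseteq> A \<and> card S = j. \<Prod>k\<in>A. if k \<in> S then b k else a k)"
    by (intro sum.cong refl) (auto simp: prod.If_cases[OF assms] Int_absorb1 Diff_eq)
  finally show ?thesis .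
qed

lemma prod_lessThan_eq_power_ones:
  fixes h :: "bool \<Rightarrow> 'a::comm_monoid_mult"
  shows "(\<Prod>k<N. h (x k)) = h True ^ ones N x * h False ^ (N - ones N x)"
proof -
  have "(\<Prod>k<N. h (x k)) = (\<Prod>k<N. if x k then h True else h False)"
    by (intro prod.cong) auto
  also have "\<dots> = h True ^ card ({..<N} \<inter> {k. x k}) * h False ^ card ({..<N} \<inter> - {k. x k})"
    by (simp add: prod.If_cases)
  also have "card ({..<N} \<inter> {k. x k}) = ones N x"
    unfolding ones_def by (rule arg_cong[where f=card]) auto
  also have "{..<N} \<inter> - {k. x k} = {..<N} - {k. k < N \<and> x k}"
    by auto
  also have "card \<dots> = N - ones N x"
    unfolding ones_def by (subst card_Diff_subset) auto
  finally show ?thesis .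
qed

lemma support_comp_permutes:
  assumes "\<pi> permutes {..<N}"
  shows "{k. k < N \<and> (z \<circ> \<pi>) k} = \<pi> -` {k. k < N \<and> z k}"
  using permutes_in_image[OF assms] by auto

lemma ones_comp_permutes:
  assumes "\<pi> permutes {..<N}"
  shows "ones N (z \<circ> \<pi>) = ones N z"
  unfolding ones_def support_comp_permutes[OF assms]
  using permutes_inj[OF assms] permutes_surj[OF assms] by (intro card_vimage_inj) auto

lemma exists_permutes_image_eq:
  assumes "finite A" "S \<subseteq> A" "T \<subseteq> A" "card S = card T"
  obtains \<pi> where "\<pi> permutes A" "\<pi> ` S = T"
proof -
  have "finite S" "finite T"
    using finite_subset assms(1-3) by auto
  then obtain f where f: "bij_betw f S T"
    using finite_same_card_bij assms(4) by blast
  have "card (A - S) = card (A - T)"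
    using assms \<open>finite S\<close> \<open>finite T\<close> by (simp add: card_Diff_subset)
  then obtain g where g: "bij_betw g (A - S) (A - T)"
    using finite_same_card_bij[of "A - S" "A - T"] assms(1) by blast
  define \<pi> where "\<pi> x = (if x \<in> S then f x else if x \<in> A then g x else x)" for x
  have "bij_betw (\<lambda>x. if x \<in> S then f x else g x) (S \<union> (A - S)) (T \<union> (A - T))"
    using f g by (rule bij_betw_disjoint_Un) auto
  moreover have "S \<union> (A - S) = A" "T \<union> (A - T) = A"
    using assms(2,3) by auto
  ultimately have "bij_betw \<pi> A A"
    by (subst bij_betw_cong[where g="\<lambda>x. if x \<in> S then f x else g x"]) (simp_all add: \<pi>_def)
  then have "\<pi> permutes A"
    by (rule bij_imp_permutes) (use assms(2) in \<open>auto simp: \<pi>_def\<close>)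
  moreover have "\<pi> ` S = T"
    using bij_betw_imp_surj_on[OF f] by (simp add: \<pi>_def)
  ultimately show thesis
    using that by blast
qed

lemma pmf_eq_pmf_of_setI:
  assumes "finite F" "set_pmf Q \<subseteq> F" "\<And>x y. x \<in> F \<Longrightarrow> y \<in> F \<Longrightarrow> pmf Q x = pmf Q y"
  shows "Q = pmf_of_set F"
proof (rule pmf_eqI)
  fix x
  have "F \<noteq> {}"
    using assms(2) set_pmf_not_empty[of Q] by blast
  show "pmf Q x = pmf (pmf_of_set F) x"
  proof (cases "x \<in> F")
    case True
    have "1 = (\<Sum>y\<in>F. pmf Q y)"
      using sum_pmf_eq_1[OF assms(1,2)] ..
    also have "\<dots> = (\<Sum>y\<in>F. pmf Q x)"
      by (intro sum.cong refl) (metis assms(3) True)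
    finally show ?thesis
      using True \<open>F \<noteq> {}\<close> assms(1) by (simp add: field_simps)
  next
    case False
    then show ?thesis
      using assms(2) \<open>F \<noteq> {}\<close> assms(1) by (auto simp: set_pmf_iff)
  qed
qed

lemma cond_pmf_exchangeable_comp_permutes:
  assumes "exchangeable N Z" "\<pi> permutes {..<N}" "set_pmf Z \<inter> {z. ones N z = \<zeta>} \<noteq> {}"
  shows "map_pmf (\<lambda>z. z \<circ> \<pi>) (cond_pmf Z {z. ones N z = \<zeta>}) = cond_pmf Z {z. ones N z = \<zeta>}"
proof -
  have invariant: "(\<lambda>z. z \<circ> \<pi>) -` {z. ones N z = \<zeta>} = {z. ones N z = \<zeta>}"
    using ones_comp_permutes[OF assms(2)] by auto
  have "cond_pmf Z {z. ones N z = \<zeta>} = cond_pmf (map_pmf (\<lambda>z. z \<circ> \<pi>) Z) {z. ones N z = \<zeta>}"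
    using assms(1,2) unfolding exchangeable_def by simp
  also have "\<dots> = map_pmf (\<lambda>z. z \<circ> \<pi>) (cond_pmf Z ((\<lambda>z. z \<circ> \<pi>) -` {z. ones N z = \<zeta>}))"
    by (rule cond_map_pmf) (unfold invariant, rule assms(3))
  finally show ?thesis
    unfolding invariant by (rule sym)
qed

lemma support_cond_pmf_exchangeable:
  assumes "exchangeable N Z" "measure_pmf.prob Z {z. ones N z = \<zeta>} > 0"
  shows "map_pmf (\<lambda>z. {k. k < N \<and> z k}) (cond_pmf Z {z. ones N z = \<zeta>})
       = pmf_of_set {S. S \<subseteq> {..<N} \<and> card S = \<zeta>}"
    (is "?Q = pmf_of_set ?F")
proof (rule pmf_eq_pmf_of_setI)
  have nonempty: "set_pmf Z \<inter> {z. ones N z = \<zeta>} \<noteq> {}"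
    using assms(2) by (subst measure_pmf_zero_iff[symmetric]) simp
  show "set_pmf ?Q \<subseteq> ?F"
  proof
    fix S assume "S \<in> set_pmf ?Q"
    then obtain z where "ones N z = \<zeta>" "S = {k. k < N \<and> z k}"
      using nonempty by auto
    then show "S \<in> ?F"
      by (simp add: ones_def subset_eq)
  qed
  show "finite ?F"
    by (rule finite_subset[of _ "Pow {..<N}"]) auto
  fix S T assume "S \<in> ?F" "T \<in> ?F"
  then obtain \<pi> where \<pi>: "\<pi> permutes {..<N}" "\<pi> ` S = T"
    using exists_permutes_image_eq[of "{..<N}" S T] by auto
  have "?Q = map_pmf (\<lambda>z. {k. k < N \<and> z k}) (map_pmf (\<lambda>z. z \<circ> \<pi>) (cond_pmf Z {z. ones N z = \<zeta>}))"
    by (simp only: cond_pmf_exchangeable_comp_permutes[OF assms(1) \<pi>(1) nonempty])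
  also have "\<dots> = map_pmf (vimage \<pi>) ?Q"
    unfolding map_pmf_comp by (simp only: support_comp_permutes[OF \<pi>(1)])
  finally have "pmf ?Q S = pmf (map_pmf (vimage \<pi>) ?Q) (\<pi> -` T)"
    by (simp only: inj_vimage_image_eq[OF permutes_inj[OF \<pi>(1)]] \<pi>(2)[symmetric])
  also have "\<dots> = pmf ?Q T"
    using permutes_surj[OF \<pi>(1)] by (intro pmf_map_inj') (metis injI surj_image_vimage_eq)
  finally show "pmf ?Q S = pmf ?Q T" .
qed

lemma integral_cond_pmf_exchangeable_prod:
  fixes g :: "nat \<Rightarrow> bool \<Rightarrow> real"
  assumes "exchangeable N Z" "measure_pmf.prob Z {z. ones N z = \<zeta>} > 0"
  shows "(\<integral>z. (\<Prod>k<N. g k (z k)) \<partial>cond_pmf Z {z. ones N z = \<zeta>})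
       = coeff (\<Prod>k<N. [:g k False, g k True:]) \<zeta> / real (N choose \<zeta>)"
proof -
  let ?F = "{S. S \<subseteq> {..<N} \<and> card S = \<zeta>}"
  have "finite ?F"
    by (rule finite_subset[of _ "Pow {..<N}"]) auto
  have "set_pmf Z \<inter> {z. ones N z = \<zeta>} \<noteq> {}"
    using assms(2) by (subst measure_pmf_zero_iff[symmetric]) simp
  then obtain z where "ones N z = \<zeta>"
    by blast
  then have "{k. k < N \<and> z k} \<in> ?F"
    by (auto simp: ones_def)
  then have "?F \<noteq> {}"
    by blast
  have "(\<integral>z. (\<Prod>k<N. g k (z k)) \<partial>cond_pmf Z {z. ones N z = \<zeta>})
      = (\<integral>S. (\<Prod>k<N. g k (k \<in> S))
           \<partial>map_pmf (\<lambda>z. {k. k < N \<and> z k}) (cond_pmf Z {z. ones N z = \<zeta>}))"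
    by simp
  also have "\<dots> = (\<Sum>S\<in>?F. \<Prod>k<N. g k (k \<in> S)) / real (card ?F)"
    unfolding support_cond_pmf_exchangeable[OF assms]
    by (rule integral_pmf_of_set[OF \<open>?F \<noteq> {}\<close> \<open>finite ?F\<close>])
  also have "(\<Sum>S\<in>?F. \<Prod>k<N. g k (k \<in> S)) = coeff (\<Prod>k<N. [:g k False, g k True:]) \<zeta>"
    unfolding coeff_prod_linear[OF finite_lessThan]
    by (intro sum.cong prod.cong refl) simp_all
  also have "card ?F = N choose \<zeta>"
    using n_subsets[of "{..<N}" \<zeta>] by simp
  finally show ?thesis .
qed

lemma integral_pmf_pair_PiM_prod:
  fixes W :: "('i \<Rightarrow> bool) pmf" and M :: "'a measure" and f :: "'i \<Rightarrow> bool \<Rightarrow> 'a \<Rightarrow> real"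
  assumes "finite I" "prob_space M"
    and f_measurable: "\<And>k b. f k b \<in> borel_measurable M"
    and f_bounded: "\<And>k b u. \<bar>f k b u\<bar> \<le> B"
  shows "(\<integral>zu. (\<Prod>k\<in>I. f k (fst zu k) (snd zu k)) \<partial>(measure_pmf W \<Otimes>\<^sub>M PiM I (\<lambda>_. M)))
       = (\<integral>z. (\<Prod>k\<in>I. \<integral>u. f k (z k) u \<partial>M) \<partial>W)"
proof -
  define P where "P = PiM I (\<lambda>_. M)"
  interpret M: prob_space M
    by fact
  interpret product_sigma_finite "\<lambda>_. M"
    by (simp add: product_sigma_finite_def M.sigma_finite_measure_axioms)
  interpret pair_prob_space "measure_pmf W" P
    unfolding P_def
    by (simp add: pair_prob_space_def pair_sigma_finite_def prob_space_imp_sigma_finite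
        prob_space_measure_pmf prob_space_PiM \<open>prob_space M\<close>)
  note f_measurable[measurable]
  have [measurable]: "Measurable.pred (measure_pmf W) (\<lambda>z. z k)" for k
    by simp
  have "(\<lambda>zu. \<Prod>k\<in>I. f k (fst zu k) (snd zu k)) \<in> borel_measurable (measure_pmf W \<Otimes>\<^sub>M P)"
    unfolding P_def by measurable
  moreover have "\<bar>\<Prod>k\<in>I. f k (z k) (u k)\<bar> \<le> B ^ card I" for z u
    unfolding abs_prod using f_bounded by (subst prod_constant[symmetric]) (intro prod_mono; simp)
  ultimately have "integrable (measure_pmf W \<Otimes>\<^sub>M P) (\<lambda>zu. \<Prod>k\<in>I. f k (fst zu k) (snd zu k))"
    by (intro integrable_const_bound[where B="B ^ card I"]) auto
  then have "(\<integral>zu. (\<Prod>k\<in>I. f k (fst zu k) (snd zu k)) \<partial>(measure_pmf W \<Otimes>\<^sub>M P))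
           = (\<integral>z. (\<integral>u. (\<Prod>k\<in>I. f k (z k) (u k)) \<partial>P) \<partial>W)"
    by (simp add: integral_fst'[symmetric])
  also have "\<dots> = (\<integral>z. (\<Prod>k\<in>I. \<integral>u. f k (z k) u \<partial>M) \<partial>W)"
    unfolding P_def using f_measurable f_bounded
    by (intro Bochner_Integration.integral_cong refl product_integral_prod \<open>finite I\<close>
        M.integrable_const_bound[where B=B]) auto
  finally show ?thesis
    unfolding P_def .
qed

definition pgf_factor :: "real \<Rightarrow> real \<Rightarrow> real \<Rightarrow> real \<Rightarrow> bool \<Rightarrow> bool \<Rightarrow> real \<Rightarrow> real" where
  "pgf_factor \<phi> \<gamma> s01 s11 xk zk u = (if step \<phi> \<gamma> xk zk u then if xk then s11 else s01 else 1)"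

definition pgf_factor_mean :: "real \<Rightarrow> real \<Rightarrow> real \<Rightarrow> real \<Rightarrow> bool \<Rightarrow> bool \<Rightarrow> real" where
  "pgf_factor_mean \<phi> \<gamma> s01 s11 xk zk =
    (if zk then (if xk then (1-\<phi>)/\<gamma> + s11 * (1 - (1-\<phi>)/\<gamma>) else s01)
     else if \<phi> \<le> \<gamma> then (if xk then 1 - \<phi>/\<gamma> + s11 * \<phi>/\<gamma> else 1)
     else (if xk then s11 else (1-\<phi>)/(1-\<gamma>) + s01 * (1 - (1-\<phi>)/(1-\<gamma>))))"

lemma pgf_factor_measurable[measurable]: "pgf_factor \<phi> \<gamma> s01 s11 xk zk \<in> borel_measurable borel"
  unfolding pgf_factor_def step_def by measurable

lemma abs_pgf_factor_le: "\<bar>pgf_factor \<phi> \<gamma> s01 s11 xk zk u\<bar> \<le> max 1 (max \<bar>s01\<bar> \<bar>s11\<bar>)"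
  unfolding pgf_factor_def by auto

lemma prod_pgf_factor_newstate:
  "(\<Prod>k<N. pgf_factor \<phi> \<gamma> s01 s11 (x k) (z k) (u k))
   = s01 ^ N01 N x (newstate \<phi> \<gamma> x z u) * s11 ^ N11 N x (newstate \<phi> \<gamma> x z u)"
proof -
  let ?y = "newstate \<phi> \<gamma> x z u"
  have "(\<Prod>k<N. pgf_factor \<phi> \<gamma> s01 s11 (x k) (z k) (u k))
      = (\<Prod>k<N. (if \<not> x k \<and> ?y k then s01 else 1) * (if x k \<and> ?y k then s11 else 1))"
    by (intro prod.cong) (auto simp: pgf_factor_def newstate_def)
  also have "\<dots> = (\<Prod>k | k < N \<and> \<not> x k \<and> ?y k. s01) * (\<Prod>k | k < N \<and> x k \<and> ?y k. s11)"
    by (simp add: prod.distrib prod.If_cases Int_def)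
  also have "\<dots> = s01 ^ N01 N x ?y * s11 ^ N11 N x ?y"
    by (simp add: N01_def N11_def)
  finally show ?thesis .
qed

lemma integral_pgf_factor:
  assumes "0 < \<phi>" "\<phi> < 1" "0 < \<gamma>" "\<gamma> < 1" "\<phi> + \<gamma> \<ge> 1"
  shows "(\<integral>u. pgf_factor \<phi> \<gamma> s01 s11 xk zk u \<partial>uniform_01) = pgf_factor_mean \<phi> \<gamma> s01 s11 xk zk"
proof -
  interpret prob_space uniform_01
    by (rule prob_space_uniform_01)
  have thresholds: "0 \<le> (1-\<phi>)/\<gamma>" "(1-\<phi>)/\<gamma> \<le> 1" "0 \<le> \<phi>/\<gamma>" "\<phi> \<le> \<gamma> \<Longrightarrow> \<phi>/\<gamma> \<le> 1"
    "0 \<le> (1-\<phi>)/(1-\<gamma>)" "\<not> \<phi> \<le> \<gamma> \<Longrightarrow> (1-\<phi>)/(1-\<gamma>) \<le> 1"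
    using assms by auto
  have if_less_swap: "(if u < t then b else a) = (if t \<le> u then a else b)" for u t a b :: real
    by simp
  show ?thesis
    using thresholds
    by (cases zk; cases xk; cases "\<phi> \<le> \<gamma>")
       (simp_all add: pgf_factor_def step_def pgf_factor_mean_def not_le if_less_swap
         integral_uniform_01_threshold algebra_simps)
qed

theorem corollary6:
  fixes N \<zeta> :: nat and \<phi> \<gamma> s01 s11 :: real
    and x :: "nat \<Rightarrow> bool" and Z :: "(nat \<Rightarrow> bool) pmf"
  assumes "N \<ge> 1"
    and "0 < \<phi>" "\<phi> < 1" "0 < \<gamma>" "\<gamma> < 1" "\<phi> + \<gamma> \<ge> 1"
    and "exchangeable N Z"
    and "measure_pmf.prob Z {z. ones N z = \<zeta>} > 0"
  shows "(\<integral>zu. s01 ^ N01 N x (newstate \<phi> \<gamma> x (fst zu) (snd zu))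
              * s11 ^ N11 N x (newstate \<phi> \<gamma> x (fst zu) (snd zu)) \<partial>cond_law N Z \<zeta>)
         = coeff (gen_poly \<phi> \<gamma> (N - ones N x) (ones N x) s01 s11) \<zeta> / real (N choose \<zeta>)"
proof -
  let ?g = "pgf_factor_mean \<phi> \<gamma> s01 s11"
  have "(\<integral>zu. s01 ^ N01 N x (newstate \<phi> \<gamma> x (fst zu) (snd zu))
              * s11 ^ N11 N x (newstate \<phi> \<gamma> x (fst zu) (snd zu)) \<partial>cond_law N Z \<zeta>)
      = (\<integral>zu. (\<Prod>k<N. pgf_factor \<phi> \<gamma> s01 s11 (x k) (fst zu k) (snd zu k)) \<partial>cond_law N Z \<zeta>)"
    by (simp only: prod_pgf_factor_newstate)
  also have "\<dots> = (\<integral>z. (\<Prod>k<N. \<integral>u. pgf_factor \<phi> \<gamma> s01 s11 (x k) (z k) u \<partial>uniform_01)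
                       \<partial>cond_pmf Z {z. ones N z = \<zeta>})"
    unfolding cond_law_def
    by (rule integral_pmf_pair_PiM_prod[OF _ prob_space_uniform_01 _ abs_pgf_factor_le]) simp_all
  also have "\<dots> = (\<integral>z. (\<Prod>k<N. ?g (x k) (z k)) \<partial>cond_pmf Z {z. ones N z = \<zeta>})"
    by (simp only: integral_pgf_factor[OF assms(2-6)])
  also have "\<dots> = coeff (\<Prod>k<N. [:?g (x k) False, ?g (x k) True:]) \<zeta> / real (N choose \<zeta>)"
    by (rule integral_cond_pmf_exchangeable_prod[OF assms(7,8)])
  also have "(\<Prod>k<N. [:?g (x k) False, ?g (x k) True:]) = gen_poly \<phi> \<gamma> (N - ones N x) (ones N x) s01 s11"
    unfolding prod_lessThan_eq_power_ones[where h="\<lambda>b. [:?g b False, ?g b True:]"]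
    by (simp add: gen_poly_def pgf_factor_mean_def mult.commute)
  finally show ?thesis .
qed

end
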